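(* Let $\rho=\frac14\big(I_4+\sum_i\beta_i\sigma_i\otimes I_2+\sum_i\gamma_i I_2\otimes\sigma_i+\sum_{l,k}(\delta_\rho)_{lk}\sigma_l\otimes\sigma_k\big)$ be a density matrix on $\mathbb{C}^2\otimes\mathbb{C}^2$, and let $\sigma_1\ge\sigma_2\ge\sigma_3\ge0$ be the singular values of $\delta_\rho\in M_3(\mathbb{R})$. Then the maximal singlet fraction of $\rho$ is $$f(\rho)=\begin{cases}\frac14(1+\sigma_1+\sigma_2+\sigma_3) & \text{if } \det\delta_\rho<0,\\[2pt] \frac14(1+\sigma_1+\sigma_2-\sigma_3) & \text{if } \det\delta_\rho\ge0.\end{cases}$$
   Context: $\sigma_1,\sigma_2,\sigma_3$ inside the expansion of $\rho$ denote the Pauli matrices (the singular values are a separate notation). A density matrix is a positive semidefinite trace-one matrix. A unit vector $\psi\in\mathbb{C}^2\otimes\mathbb{C}^2$ is maximally entangled if the partial trace of $|\psi\rangle\langle\psi|$ over either factor equals $\frac12 I_2$. The maximal singlet fraction is $f(\rho)=\max\{\langle\psi|\rho|\psi\rangle:\psi \text{ maximally entangled}\}$. *)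

theory Defs
  imports "HOL-Analysis.Analysis" "HOL-Library.Numeral_Type"
begin

text \<open>The two-qubit space C^2 (x) C^2 is modelled as complex ^ (2 * 2) (index pairs);
  operators on it as complex ^ (2 * 2) ^ (2 * 2). Indices of the qubit type 2 are 0, 1.
  Pauli indices 1,2,3 of the paper correspond to the elements 0,1,2 of type 3.\<close>

type_synonym qubit_op = "complex^2^2"
type_synonym two_qubit_vec = "complex^(2 \<times> 2)"
type_synonym two_qubit_op = "complex^(2 \<times> 2)^(2 \<times> 2)"

definition cscale :: "complex \<Rightarrow> complex^'n^'m \<Rightarrow> complex^'n^'m" where
  "cscale c A = (\<chi> i j. c * A $ i $ j)"

definition kron :: "qubit_op \<Rightarrow> qubit_op \<Rightarrow> two_qubit_op" where
  "kron A B = (\<chi> p. \<chi> q. A $ fst p $ fst q * B $ snd p $ snd q)"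

definition pauli_x :: qubit_op where
  "pauli_x = (\<chi> i j. if i \<noteq> j then 1 else 0)"
definition pauli_y :: qubit_op where
  "pauli_y = (\<chi> i j. if i = 0 \<and> j = 1 then - \<i> else if i = 1 \<and> j = 0 then \<i> else 0)"
definition pauli_z :: qubit_op where
  "pauli_z = (\<chi> i j. if i = j then (if i = 0 then 1 else -1) else 0)"

definition pauli :: "3 \<Rightarrow> qubit_op" where
  "pauli k = (if k = 0 then pauli_x else if k = 1 then pauli_y else pauli_z)"

definition pauli_state :: "real^3 \<Rightarrow> real^3 \<Rightarrow> real^3^3 \<Rightarrow> two_qubit_op" where
  "pauli_state \<beta> \<gamma> \<delta> = cscale (1/4)
     (mat 1
      + (\<Sum>i\<in>UNIV. cscale (complex_of_real (\<beta> $ i)) (kron (pauli i) (mat 1)))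
      + (\<Sum>i\<in>UNIV. cscale (complex_of_real (\<gamma> $ i)) (kron (mat 1) (pauli i)))
      + (\<Sum>l\<in>UNIV. \<Sum>k\<in>UNIV. cscale (complex_of_real (\<delta> $ l $ k)) (kron (pauli l) (pauli k))))"

definition hermitian_op :: "two_qubit_op \<Rightarrow> bool" where
  "hermitian_op A \<longleftrightarrow> (\<forall>a b. A $ a $ b = cnj (A $ b $ a))"

definition expect :: "two_qubit_op \<Rightarrow> two_qubit_vec \<Rightarrow> complex" where
  "expect A v = (\<Sum>a\<in>UNIV. \<Sum>b\<in>UNIV. cnj (v $ a) * A $ a $ b * v $ b)"

definition positive_semidefinite :: "two_qubit_op \<Rightarrow> bool" where
  "positive_semidefinite A \<longleftrightarrow> hermitian_op A \<and>
     (\<forall>v. Im (expect A v) = 0 \<and> Re (expect A v) \<ge> 0)"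

definition density_matrix :: "two_qubit_op \<Rightarrow> bool" where
  "density_matrix A \<longleftrightarrow> positive_semidefinite A \<and> (\<Sum>a\<in>UNIV. A $ a $ a) = 1"

definition ptrace2 :: "two_qubit_vec \<Rightarrow> qubit_op" where
  "ptrace2 \<psi> = (\<chi> i k. \<Sum>j\<in>UNIV. \<psi> $ (i, j) * cnj (\<psi> $ (k, j)))"
definition ptrace1 :: "two_qubit_vec \<Rightarrow> qubit_op" where
  "ptrace1 \<psi> = (\<chi> j l. \<Sum>i\<in>UNIV. \<psi> $ (i, j) * cnj (\<psi> $ (i, l)))"

definition maximally_entangled :: "two_qubit_vec \<Rightarrow> bool" where
  "maximally_entangled \<psi> \<longleftrightarrow> norm \<psi> = 1 \<and>
     ptrace2 \<psi> = cscale (1/2) (mat 1) \<and> ptrace1 \<psi> = cscale (1/2) (mat 1)"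

text \<open>Maximal singlet fraction (the supremum is attained by compactness).\<close>
definition max_singlet_fraction :: "two_qubit_op \<Rightarrow> real" where
  "max_singlet_fraction \<rho> = Sup {Re (expect \<rho> \<psi>) | \<psi>. maximally_entangled \<psi>}"

definition singular_values_desc :: "real^3^3 \<Rightarrow> real^3 \<Rightarrow> bool" where
  "singular_values_desc M s \<longleftrightarrow>
     s $ 0 \<ge> s $ 1 \<and> s $ 1 \<ge> s $ 2 \<and> s $ 2 \<ge> 0 \<and>
     (\<exists>U V. orthogonal_matrix U \<and> orthogonal_matrix V \<and>
        M = U ** (\<chi> i j. if i = j then s $ i else 0) ** transpose V)"

end

theory Submission
  imports Defs
begin

(* Up to a scalar, every maximally entangled vector is a|00> + b|01> - b'|10> + a'|11> (primes
   denoting complex conjugates) with |a|^2 + |b|^2 = 1.  For it the local Pauli terms of rho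
   average to zero and the correlation matrix <sigma_l (x) sigma_k> is minus the rotation matrix
   of the unit quaternion built from a and b; conversely every orthogonal T with det T = -1
   arises this way, since the matrix 4 q q^T of the quaternion is a linear function of T.  Hence
   f(rho) = (1 + max <delta, T>) / 4, the maximum over such T.  Writing delta = U diag(s) V^T
   turns <delta, T> into sum_i s_i W_ii with W = U^T T V orthogonal.  Diagonal entries of an
   orthogonal matrix are at most 1, giving s_1 + s_2 + s_3; when det U det V = 1, W itself has
   det W = -1, hence trace W <= 1, and Abel summation gives s_1 + s_2 - s_3.  The sign of
   det U det V is that of det delta unless s_3 = 0, and W = diag(1, 1, -det U det V) attains
   the bound. *)

(* The library enumerates the numeral types 2, 3, 4 from 1; the definitions index from 0. *)
lemma num3_3_eq_0: "(3::3) = 0" by simp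
lemma num3_4_eq_1: "(4::3) = 1" by simp
lemma num4_4_eq_0: "(4::4) = 0" by simp
lemma num2_2_eq_0: "(2::2) = 0" by simp

lemma sum_UNIV_2: "sum f (UNIV::2 set) = f 0 + f 1"
  unfolding sum_2 num2_2_eq_0 by (simp add: ac_simps)
lemma forall_UNIV_2: "(\<forall>i::2. P i) \<longleftrightarrow> P 0 \<and> P 1"
  unfolding forall_2 num2_2_eq_0 by blast
lemma sum_UNIV_3: "sum f (UNIV::3 set) = f 0 + f 1 + f 2"
  unfolding sum_3 num3_3_eq_0 by (simp add: ac_simps)
lemma forall_UNIV_3: "(\<forall>i::3. P i) \<longleftrightarrow> P 0 \<and> P 1 \<and> P 2"
  unfolding forall_3 num3_3_eq_0 by blast
lemma sum_UNIV_4: "sum f (UNIV::4 set) = f 0 + f 1 + f 2 + f 3"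
  unfolding sum_4 num4_4_eq_0 by (simp add: ac_simps)
lemma forall_UNIV_4: "(\<forall>i::4. P i) \<longleftrightarrow> P 0 \<and> P 1 \<and> P 2 \<and> P 3"
  unfolding forall_4 num4_4_eq_0 by blast

lemma sum_UNIV_prod:
  "sum f (UNIV :: ('a::finite \<times> 'b::finite) set) = (\<Sum>i\<in>UNIV. \<Sum>j\<in>UNIV. f (i, j))"
  by (simp add: sum.cartesian_product)
lemma sum_UNIV_2x2: "sum f (UNIV::(2 \<times> 2) set) = f (0,0) + f (0,1) + f (1,0) + f (1,1)"
  unfolding sum_UNIV_prod sum_UNIV_2 by (simp add: add.assoc)
lemma forall_UNIV_2x2:
  "(\<forall>p::2 \<times> 2. P p) \<longleftrightarrow> P (0,0) \<and> P (0,1) \<and> P (1,0) \<and> P (1,1)"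
  by (simp add: split_paired_All forall_UNIV_2 conj_assoc)

lemma det_3_0: "det (A::'a::comm_ring_1^3^3) =
    A$0$0 * A$1$1 * A$2$2 + A$0$1 * A$1$2 * A$2$0 + A$0$2 * A$1$0 * A$2$1
  - A$0$0 * A$1$2 * A$2$1 - A$0$1 * A$1$0 * A$2$2 - A$0$2 * A$1$1 * A$2$0"
  unfolding det_3 num3_3_eq_0 by (simp add: algebra_simps)

subsection \<open>Frobenius inner product and orthogonal matrices\<close>

lemma inner_matrix_mul_left:
  fixes A B C :: "real^'n^'n"
  shows "(A ** B) \<bullet> C = B \<bullet> (transpose A ** C)"
proof -
  have "(A ** B) \<bullet> C = (\<Sum>i\<in>UNIV. \<Sum>j\<in>UNIV. \<Sum>k\<in>UNIV. A$i$k * B$k$j * C$i$j)"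
    by (simp add: inner_vec_def matrix_matrix_mult_def sum_distrib_right)
  also have "\<dots> = (\<Sum>i\<in>UNIV. \<Sum>k\<in>UNIV. \<Sum>j\<in>UNIV. A$i$k * B$k$j * C$i$j)"
    by (rule sum.cong[OF refl], rule sum.swap)
  also have "\<dots> = (\<Sum>k\<in>UNIV. \<Sum>i\<in>UNIV. \<Sum>j\<in>UNIV. A$i$k * B$k$j * C$i$j)"
    by (rule sum.swap)
  also have "\<dots> = (\<Sum>k\<in>UNIV. \<Sum>j\<in>UNIV. \<Sum>i\<in>UNIV. A$i$k * B$k$j * C$i$j)"
    by (rule sum.cong[OF refl], rule sum.swap)
  also have "\<dots> = B \<bullet> (transpose A ** C)"
    by (simp add: inner_vec_def matrix_matrix_mult_def transpose_def sum_distrib_left mult_ac)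
  finally show ?thesis .
qed

lemma inner_transpose:
  fixes X Y :: "real^'n^'m"
  shows "transpose X \<bullet> transpose Y = X \<bullet> Y"
  unfolding inner_vec_def transpose_def by (simp add: sum.swap[of _ "UNIV::'n set"])

lemma inner_matrix_mul_right:
  fixes A B C :: "real^'n^'n"
  shows "(A ** B) \<bullet> C = A \<bullet> (C ** transpose B)"
  by (metis inner_matrix_mul_left inner_transpose matrix_transpose_mul transpose_transpose)

lemma inner_matrix_sandwich:
  fixes A T U V :: "real^'n^'n"
  shows "(U ** A ** transpose V) \<bullet> T = A \<bullet> (transpose U ** T ** V)"
proof -
  have "(U ** A ** transpose V) \<bullet> T = (A ** transpose V) \<bullet> (transpose U ** T)"
    by (simp only: matrix_mul_assoc[symmetric] inner_matrix_mul_left)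
  also have "\<dots> = A \<bullet> (transpose U ** T ** V)"
    by (simp only: inner_matrix_mul_right transpose_transpose)
  finally show ?thesis .
qed

definition diag_mat :: "real^'n \<Rightarrow> real^'n^'n" where
  "diag_mat s = (\<chi> i j. if i = j then s$i else 0)"

lemma inner_diag_mat: "diag_mat s \<bullet> W = (\<Sum>i\<in>UNIV. s$i * W$i$i)"
  unfolding inner_vec_def diag_mat_def by (simp add: if_distrib[of "\<lambda>x. x * _"] cong: if_cong)

lemma det_diag_mat_3: "det (diag_mat s :: real^3^3) = s$0 * s$1 * s$2"
  by (simp add: det_3_0 diag_mat_def)

lemma orthogonal_matrix_diag_mat:
  assumes "\<And>i. (e$i)\<^sup>2 = 1"
  shows "orthogonal_matrix (diag_mat e)"
proof -
  have "(transpose (diag_mat e) ** diag_mat e) $ i $ j = (if i = j then (e$i)\<^sup>2 else 0)" for i j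
    by (simp add: matrix_matrix_mult_def transpose_def diag_mat_def if_distrib[of "\<lambda>x. x * _"]
        power2_eq_square cong: if_cong)
  then show ?thesis
    using assms by (simp add: orthogonal_matrix vec_eq_iff mat_def)
qed

lemma orthogonal_matrix_nth_le_1:
  fixes Q :: "real^'n^'n"
  assumes "orthogonal_matrix Q"
  shows "Q$i$j \<le> 1"
proof -
  have "\<bar>column j Q $ i\<bar> \<le> norm (column j Q)"
    by (rule component_le_norm_cart)
  then show ?thesis
    using assms by (simp add: orthogonal_matrix_orthonormal_columns column_def)
qed

lemma inner_diag_mat_orthogonal_le:
  fixes W :: "real^'n^'n"
  assumes "orthogonal_matrix W" and "\<And>i. 0 \<le> s$i"
  shows "diag_mat s \<bullet> W \<le> (\<Sum>i\<in>UNIV. s$i)"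
  unfolding inner_diag_mat
  by (intro sum_mono mult_left_le orthogonal_matrix_nth_le_1 assms)

lemma orthogonal_matrix_det_cases:
  fixes U V :: "real^'n^'n"
  assumes "orthogonal_matrix U" "orthogonal_matrix V"
  shows "det U * det V = 1 \<or> det U * det V = -1"
  using det_orthogonal_matrix[OF assms(1)] det_orthogonal_matrix[OF assms(2)] by auto

subsection \<open>Quaternion parametrisation of rotoinversions\<close>

lemma orthogonal_matrix_cofactor_3:
  fixes W :: "real^3^3"
  assumes "orthogonal_matrix W"
  shows "W$(i+1)$(j+1) * W$(i+2)$(j+2) - W$(i+1)$(j+2) * W$(i+2)$(j+1) = det W * W$i$j"
proof -
  define C :: "real^3^3" where
    "C = (\<chi> i j. W$(i+1)$(j+1) * W$(i+2)$(j+2) - W$(i+1)$(j+2) * W$(i+2)$(j+1))"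
  have adj: "W ** transpose C = mat (det W)"
    unfolding vec_eq_iff forall_UNIV_3
    by (simp add: C_def matrix_matrix_mult_def transpose_def mat_def
        sum_UNIV_3 det_3_0 num3_3_eq_0 num3_4_eq_1 algebra_simps)
  have "transpose C = transpose W ** (W ** transpose C)"
    using assms by (simp add: orthogonal_matrix_def matrix_mul_assoc)
  also have "\<dots> = det W *\<^sub>R transpose W"
    unfolding adj vec_eq_iff forall_UNIV_3
    by (simp add: matrix_matrix_mult_def transpose_def mat_def sum_UNIV_3)
  finally have "transpose C $ j $ i = det W * W$i$j"
    by (simp add: transpose_def)
  then show ?thesis
    by (simp add: C_def transpose_def)
qed

lemma rank_one_factor:
  fixes P :: "real^'n^'n"
  assumes minors: "\<And>k m n. P$k$k * P$m$n = P$k$m * P$k$n" and "trace P > 0"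
  obtains x :: "real^'n" where "\<And>m n. P$m$n = x$m * x$n"
proof -
  have "\<not> (\<forall>k. P$k$k \<le> 0)"
    using \<open>trace P > 0\<close> sum_nonpos[of UNIV "\<lambda>k. P$k$k"] by (auto simp: trace_def)
  then obtain k where k: "P$k$k > 0"
    by (auto simp: not_le)
  define x :: "real^'n" where "x = (\<chi> n. P$k$n / sqrt (P$k$k))"
  have "x$m * x$n = P$k$m * P$k$n / (sqrt (P$k$k) * sqrt (P$k$k))" for m n
    by (simp add: x_def)
  also have "\<dots> m n = P$m$n" for m n
    using minors[of k m n] k by (simp add: field_simps)
  finally show thesis
    using that by metis
qed

(* Minus the rotation matrix of the quaternion q2 + q1 i + q0 j - q3 k. *)
definition quat_rotoinversion :: "real \<Rightarrow> real \<Rightarrow> real \<Rightarrow> real \<Rightarrow> real^3^3" where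
  "quat_rotoinversion q0 q1 q2 q3 = (\<chi> l k.
     if l = 0 then
       (if k = 0 then q0\<^sup>2 - q1\<^sup>2 - q2\<^sup>2 + q3\<^sup>2
        else if k = 1 then -2*(q0*q1 + q2*q3) else 2*(q1*q3 - q0*q2))
     else if l = 1 then
       (if k = 0 then 2*(q2*q3 - q0*q1)
        else if k = 1 then -q0\<^sup>2 + q1\<^sup>2 - q2\<^sup>2 + q3\<^sup>2 else 2*(q0*q3 + q1*q2))
     else
       (if k = 0 then 2*(q0*q2 + q1*q3)
        else if k = 1 then 2*(q0*q3 - q1*q2) else q0\<^sup>2 + q1\<^sup>2 - q2\<^sup>2 - q3\<^sup>2))"

lemma quat_rotoinversion_nth:
  "quat_rotoinversion q0 q1 q2 q3 $ 0 $ 0 = q0\<^sup>2 - q1\<^sup>2 - q2\<^sup>2 + q3\<^sup>2"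
  "quat_rotoinversion q0 q1 q2 q3 $ 0 $ 1 = -2*(q0*q1 + q2*q3)"
  "quat_rotoinversion q0 q1 q2 q3 $ 0 $ 2 = 2*(q1*q3 - q0*q2)"
  "quat_rotoinversion q0 q1 q2 q3 $ 1 $ 0 = 2*(q2*q3 - q0*q1)"
  "quat_rotoinversion q0 q1 q2 q3 $ 1 $ 1 = -q0\<^sup>2 + q1\<^sup>2 - q2\<^sup>2 + q3\<^sup>2"
  "quat_rotoinversion q0 q1 q2 q3 $ 1 $ 2 = 2*(q0*q3 + q1*q2)"
  "quat_rotoinversion q0 q1 q2 q3 $ 2 $ 0 = 2*(q0*q2 + q1*q3)"
  "quat_rotoinversion q0 q1 q2 q3 $ 2 $ 1 = 2*(q0*q3 - q1*q2)"
  "quat_rotoinversion q0 q1 q2 q3 $ 2 $ 2 = q0\<^sup>2 + q1\<^sup>2 - q2\<^sup>2 - q3\<^sup>2"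
  by (simp_all add: quat_rotoinversion_def)

lemma rotoinversion_quat_rotoinversion:
  assumes "q0\<^sup>2 + q1\<^sup>2 + q2\<^sup>2 + q3\<^sup>2 = 1"
  shows "rotoinversion_matrix (quat_rotoinversion q0 q1 q2 q3)"
  unfolding rotoinversion_matrix_def orthogonal_matrix vec_eq_iff forall_UNIV_3
  using assms
  by (simp add: matrix_matrix_mult_def transpose_def mat_def sum_UNIV_3 det_3_0
      quat_rotoinversion_nth; algebra)

lemma trace_quat_rotoinversion:
  "trace (quat_rotoinversion q0 q1 q2 q3) = q0\<^sup>2 + q1\<^sup>2 + q3\<^sup>2 - 3 * q2\<^sup>2"
  by (simp add: trace_def sum_UNIV_3 quat_rotoinversion_nth)

(* For T = quat_rotoinversion q0 q1 q2 q3 with q0^2 + q1^2 + q2^2 + q3^2 = 1 this is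
   4 (q_m q_n)_{m,n}; its entries are linear in T, so the quaternion can be read off from T. *)
definition quat_gram :: "real^3^3 \<Rightarrow> real^4^4" where
  "quat_gram T = (\<chi> m n.
     if m = 0 then
       (if n = 0 then 1 + T$0$0 - T$1$1 + T$2$2 else if n = 1 then - T$0$1 - T$1$0
        else if n = 2 then T$2$0 - T$0$2 else T$1$2 + T$2$1)
     else if m = 1 then
       (if n = 0 then - T$0$1 - T$1$0 else if n = 1 then 1 - T$0$0 + T$1$1 + T$2$2
        else if n = 2 then T$1$2 - T$2$1 else T$2$0 + T$0$2)
     else if m = 2 then
       (if n = 0 then T$2$0 - T$0$2 else if n = 1 then T$1$2 - T$2$1
        else if n = 2 then 1 - T$0$0 - T$1$1 - T$2$2 else T$1$0 - T$0$1)
     else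
       (if n = 0 then T$1$2 + T$2$1 else if n = 1 then T$2$0 + T$0$2
        else if n = 2 then T$1$0 - T$0$1 else 1 + T$0$0 + T$1$1 - T$2$2))"

lemma quat_gram_minors:
  fixes T :: "real^3^3"
  assumes "rotoinversion_matrix T"
  shows "quat_gram T $k$k * quat_gram T $m$n = quat_gram T $k$m * quat_gram T $k$n"
proof -
  have orth: "transpose T ** T = mat 1" "T ** transpose T = mat 1"
    using assms by (simp_all add: rotoinversion_matrix_def orthogonal_matrix_def)
  have cof: "T$(i+1)$(j+1) * T$(i+2)$(j+2) - T$(i+1)$(j+2) * T$(i+2)$(j+1) = - T$i$j" for i j
    using assms orthogonal_matrix_cofactor_3[of T i j] by (simp add: rotoinversion_matrix_def)
  note eqs = orth[unfolded vec_eq_iff forall_UNIV_3, simplified matrix_matrix_mult_def transpose_def mat_def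
    sum_UNIV_3 vec_lambda_beta, simplified]
    cof[of 0 0] cof[of 0 1] cof[of 0 2] cof[of 1 0] cof[of 1 1] cof[of 1 2] cof[of 2 0] cof[of 2 1] cof[of 2 2]
  \<comment> \<open>Each minor identity is a polynomial consequence of orthogonality and of adj T = - transpose T.\<close>
  have "\<forall>k m n. quat_gram T $k$k * quat_gram T $m$n = quat_gram T $k$m * quat_gram T $k$n"
    unfolding forall_UNIV_4 using eqs
    by (simp add: quat_gram_def num3_3_eq_0 num3_4_eq_1; intro conjI; algebra)
  then show ?thesis by blast
qed

lemma rotoinversion_matrix_obtain_quat:
  fixes T :: "real^3^3"
  assumes "rotoinversion_matrix T"
  obtains q0 q1 q2 q3 where "q0\<^sup>2 + q1\<^sup>2 + q2\<^sup>2 + q3\<^sup>2 = 1"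
    and "T = quat_rotoinversion q0 q1 q2 q3"
proof -
  have "trace (quat_gram T) = 4"
    by (simp add: trace_def sum_UNIV_4 quat_gram_def)
  then obtain x :: "real^4" where x: "\<And>m n. quat_gram T $m$n = x$m * x$n"
    using rank_one_factor quat_gram_minors[OF assms] by (metis zero_less_numeral)
  have "\<forall>m n. quat_gram T $m$n = x$m * x$n"
    using x by blast
  note gram = this[unfolded forall_UNIV_4, simplified quat_gram_def vec_lambda_beta, simplified]
  show thesis
  proof
    show "(x$0/2)\<^sup>2 + (x$1/2)\<^sup>2 + (x$2/2)\<^sup>2 + (x$3/2)\<^sup>2 = 1"
      unfolding power_divide power2_eq_square using gram by linarith
    show "T = quat_rotoinversion (x$0/2) (x$1/2) (x$2/2) (x$3/2)"
      unfolding vec_eq_iff forall_UNIV_3 quat_rotoinversion_nth power2_eq_square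
      using gram by (elim conjE; intro conjI; simp add: field_simps; linarith)
  qed
qed

subsection \<open>Maximising the correlation over rotoinversions\<close>

lemma trace_rotoinversion_le_1:
  fixes W :: "real^3^3"
  assumes "rotoinversion_matrix W"
  shows "trace W \<le> 1"
proof -
  obtain q0 q1 q2 q3 where "q0\<^sup>2 + q1\<^sup>2 + q2\<^sup>2 + q3\<^sup>2 = 1"
    and "W = quat_rotoinversion q0 q1 q2 q3"
    using rotoinversion_matrix_obtain_quat[OF assms] .
  then have "trace W = 1 - 4 * q2\<^sup>2"
    by (simp add: trace_quat_rotoinversion)
  then show ?thesis
    by simp
qed

lemma inner_diag_mat_rotoinversion_le:
  fixes W :: "real^3^3"
  assumes W: "rotoinversion_matrix W" and s: "s$1 \<le> s$0" "s$2 \<le> s$1" "0 \<le> s$2"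
  shows "diag_mat s \<bullet> W \<le> s$0 + s$1 - s$2"
proof -
  have W00: "W$0$0 \<le> 1" and W11: "W$1$1 \<le> 1"
    using W by (simp_all add: rotoinversion_matrix_def orthogonal_matrix_nth_le_1)
  have tr: "W$0$0 + W$1$1 + W$2$2 \<le> 1"
    using trace_rotoinversion_le_1[OF W] by (simp add: trace_def sum_UNIV_3)
  have "diag_mat s \<bullet> W =
      (s$0 - s$1) * W$0$0 + (s$1 - s$2) * (W$0$0 + W$1$1) + s$2 * (W$0$0 + W$1$1 + W$2$2)"
    by (simp add: inner_diag_mat sum_UNIV_3 algebra_simps)
  also have "\<dots> \<le> (s$0 - s$1) * 1 + (s$1 - s$2) * 2 + s$2 * 1"
    using W00 W11 tr s by (intro add_mono mult_left_mono) auto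
  finally show ?thesis
    by simp
qed

lemma singular_values_descE:
  assumes "singular_values_desc \<delta> s"
  obtains U V where "orthogonal_matrix U" and "orthogonal_matrix V"
    and "\<delta> = U ** diag_mat s ** transpose V" and "det \<delta> = det U * det V * (s$0 * s$1 * s$2)"
    and "s$1 \<le> s$0" and "s$2 \<le> s$1" and "0 \<le> s$2"
proof -
  obtain U V where "orthogonal_matrix U" and "orthogonal_matrix V"
    and \<delta>: "\<delta> = U ** diag_mat s ** transpose V" and "s$1 \<le> s$0" "s$2 \<le> s$1" "0 \<le> s$2"
    using assms by (auto simp: singular_values_desc_def diag_mat_def)
  moreover have "det \<delta> = det U * det V * (s$0 * s$1 * s$2)"
    by (simp add: \<delta> det_mul det_diag_mat_3)
  ultimately show thesis
    using that by blast
qed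

lemma inner_rotoinversion_le:
  fixes \<delta> T :: "real^3^3"
  assumes svd: "singular_values_desc \<delta> s" and T: "rotoinversion_matrix T"
  shows "\<delta> \<bullet> T \<le> (if det \<delta> < 0 then s$0 + s$1 + s$2 else s$0 + s$1 - s$2)"
proof -
  obtain U V where U: "orthogonal_matrix U" and V: "orthogonal_matrix V"
    and \<delta>: "\<delta> = U ** diag_mat s ** transpose V"
    and det\<delta>: "det \<delta> = det U * det V * (s$0 * s$1 * s$2)"
    and s: "s$1 \<le> s$0" "s$2 \<le> s$1" "0 \<le> s$2"
    using singular_values_descE[OF svd] .
  define W where "W = transpose U ** T ** V"
  have W: "orthogonal_matrix W"
    using T U V by (simp add: W_def rotoinversion_matrix_def orthogonal_matrix_mul)
  have inner: "\<delta> \<bullet> T = diag_mat s \<bullet> W"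
    by (simp add: \<delta> W_def inner_matrix_sandwich)
  have "\<forall>i. 0 \<le> s$i"
    unfolding forall_UNIV_3 using s by linarith
  then have "\<delta> \<bullet> T \<le> s$0 + s$1 + s$2"
    using inner_diag_mat_orthogonal_le[OF W, of s] by (simp add: inner sum_UNIV_3)
  moreover have "\<delta> \<bullet> T \<le> s$0 + s$1 - s$2" if "0 \<le> det \<delta>" "0 < s$2"
  proof -
    have "0 < s$0 * s$1 * s$2"
      using s that by simp
    then have "det U * det V \<noteq> -1"
      using that(1) det\<delta> by auto
    then have "det U * det V = 1"
      using orthogonal_matrix_det_cases[OF U V] by blast
    then have "rotoinversion_matrix W"
      using T W by (simp add: rotoinversion_matrix_def W_def det_mul)
    then show ?thesis
      using inner_diag_mat_rotoinversion_le s inner by simp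
  qed
  ultimately show ?thesis
    using s by (cases "s$2 = 0") (auto simp: not_less)
qed

lemma inner_rotoinversion_attains:
  fixes \<delta> :: "real^3^3"
  assumes svd: "singular_values_desc \<delta> s"
  obtains T where "rotoinversion_matrix T"
    and "\<delta> \<bullet> T = (if det \<delta> < 0 then s$0 + s$1 + s$2 else s$0 + s$1 - s$2)"
proof -
  obtain U V where U: "orthogonal_matrix U" and V: "orthogonal_matrix V"
    and \<delta>: "\<delta> = U ** diag_mat s ** transpose V"
    and det\<delta>: "det \<delta> = det U * det V * (s$0 * s$1 * s$2)"
    and s: "s$1 \<le> s$0" "s$2 \<le> s$1" "0 \<le> s$2"
    using singular_values_descE[OF svd] .
  define \<epsilon> where "\<epsilon> = - det U * det V"
  have \<epsilon>: "\<epsilon> = 1 \<or> \<epsilon> = -1"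
    using orthogonal_matrix_det_cases[OF U V] by (auto simp: \<epsilon>_def)
  define e :: "real^3" where "e = (\<chi> i. if i = 2 then \<epsilon> else 1)"
  define T where "T = U ** diag_mat e ** transpose V"
  have "orthogonal_matrix (diag_mat e)"
    using \<epsilon> by (intro orthogonal_matrix_diag_mat) (auto simp: e_def)
  then have "orthogonal_matrix T"
    using U V by (simp add: T_def orthogonal_matrix_mul)
  moreover have "det T = -1"
    using \<epsilon> by (auto simp: T_def det_mul det_diag_mat_3 e_def \<epsilon>_def)
  ultimately have T: "rotoinversion_matrix T"
    by (simp add: rotoinversion_matrix_def)
  have "transpose U ** T ** V = (transpose U ** U) ** diag_mat e ** (transpose V ** V)"
    by (simp add: T_def matrix_mul_assoc)
  also have "\<dots> = diag_mat e"
    using U V by (simp add: orthogonal_matrix_def)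
  finally have "\<delta> \<bullet> T = diag_mat s \<bullet> diag_mat e"
    by (simp add: \<delta> inner_matrix_sandwich)
  also have "\<dots> = s$0 + s$1 + \<epsilon> * s$2"
    unfolding inner_diag_mat sum_UNIV_3 by (simp add: diag_mat_def e_def)
  also have "\<epsilon> * s$2 = (if det \<delta> < 0 then s$2 else - s$2)"
  proof -
    have "det \<delta> = - \<epsilon> * (s$0 * s$1 * s$2)"
      using det\<delta> by (simp add: \<epsilon>_def)
    then show ?thesis
      using \<epsilon> s by (cases "s$2 = 0") (auto simp: mult_less_0_iff)
  qed
  finally show thesis
    using that T by simp
qed

subsection \<open>Maximally entangled two-qubit vectors\<close>

lemma expect_add: "expect (A + B) v = expect A v + expect B v"
  by (simp add: expect_def distrib_left distrib_right sum.distrib)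

lemma expect_cscale: "expect (cscale c A) v = c * expect A v"
  by (simp add: expect_def cscale_def sum_distrib_left mult_ac)

lemma expect_sum: "expect (\<Sum>i\<in>I. A i) v = (\<Sum>i\<in>I. expect (A i) v)"
proof (induction I rule: infinite_finite_induct)
  case (infinite I)
  then show ?case by (simp add: expect_def)
next
  case empty
  then show ?case by (simp add: expect_def)
next
  case (insert i I)
  then show ?case by (simp add: expect_add)
qed

lemma expect_smult: "expect A (c *s v) = (cnj c * c) * expect A v"
  by (simp add: expect_def sum_distrib_left mult_ac)

lemma expect_kron:
  "expect (kron A B) v = (\<Sum>i\<in>UNIV. \<Sum>j\<in>UNIV. \<Sum>k\<in>UNIV. \<Sum>l\<in>UNIV.
     cnj (v$(i,j)) * A$i$k * B$j$l * v$(k,l))"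
  unfolding expect_def kron_def sum_UNIV_prod
  by (simp add: sum_distrib_left sum_distrib_right mult.assoc)

lemma ptrace2_smult: "ptrace2 (c *s \<psi>) = cscale (c * cnj c) (ptrace2 \<psi>)"
  by (simp add: vec_eq_iff ptrace2_def cscale_def sum_distrib_left mult_ac)

lemma ptrace1_smult: "ptrace1 (c *s \<psi>) = cscale (c * cnj c) (ptrace1 \<psi>)"
  by (simp add: vec_eq_iff ptrace1_def cscale_def sum_distrib_left mult_ac)

lemma cmod_power2_eq_iff: "(cmod z)\<^sup>2 = r \<longleftrightarrow> z * cnj z = complex_of_real r"
  by (metis complex_norm_square of_real_eq_iff)

lemma ptrace2_half_obtain_phase:
  assumes "ptrace2 \<psi> = cscale (1/2) (mat 1)"
  obtains \<mu> where "cmod \<mu> = 1" and "(cmod (\<psi>$(0,0)))\<^sup>2 + (cmod (\<psi>$(0,1)))\<^sup>2 = 1/2"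
    and "\<psi>$(1,0) = - \<mu> * cnj (\<psi>$(0,1))" and "\<psi>$(1,1) = \<mu> * cnj (\<psi>$(0,0))"
proof -
  define p q r s where "p = \<psi>$(0,0)" and "q = \<psi>$(0,1)" and "r = \<psi>$(1,0)" and "s = \<psi>$(1,1)"
  have pq: "p * cnj p + q * cnj q = 1/2" and rs: "r * cnj r + s * cnj s = 1/2"
    and orth: "r * cnj p + s * cnj q = 0"
    using assms unfolding vec_eq_iff forall_UNIV_2
    by (simp_all add: ptrace2_def sum_UNIV_2 cscale_def mat_def p_def q_def r_def s_def)
  define \<mu> where "\<mu> = 2 * (p * s - q * r)"
  have r: "r = - \<mu> * cnj q" and s: "s = \<mu> * cnj p"
    unfolding \<mu>_def using pq orth by algebra+
  have "\<mu> * cnj \<mu> * (p * cnj p + q * cnj q) = r * cnj r + s * cnj s"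
    unfolding r s by (simp add: algebra_simps)
  then have "\<mu> * cnj \<mu> = 1"
    using pq rs by simp
  then have "(cmod \<mu>)\<^sup>2 = 1"
    by (simp add: cmod_power2_eq_iff)
  then have "cmod \<mu> = 1"
    using norm_ge_zero[of \<mu>] by (auto simp: power2_eq_1_iff)
  moreover have "complex_of_real ((cmod p)\<^sup>2 + (cmod q)\<^sup>2) = 1/2"
    using pq by (simp only: of_real_add complex_norm_square)
  then have "(cmod p)\<^sup>2 + (cmod q)\<^sup>2 = 1/2"
    by (simp add: complex_eq_iff)
  ultimately show thesis
    using that r s unfolding p_def q_def r_def s_def by blast
qed

lemma pauli_nth:
  "pauli 0 $ 0 $ 0 = 0" "pauli 0 $ 0 $ 1 = 1" "pauli 0 $ 1 $ 0 = 1" "pauli 0 $ 1 $ 1 = 0"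
  "pauli 1 $ 0 $ 0 = 0" "pauli 1 $ 0 $ 1 = - \<i>" "pauli 1 $ 1 $ 0 = \<i>" "pauli 1 $ 1 $ 1 = 0"
  "pauli 2 $ 0 $ 0 = 1" "pauli 2 $ 0 $ 1 = 0" "pauli 2 $ 1 $ 0 = 0" "pauli 2 $ 1 $ 1 = -1"
  by (simp_all add: pauli_def pauli_x_def pauli_y_def pauli_z_def)

definition ent_vec :: "complex \<Rightarrow> complex \<Rightarrow> two_qubit_vec" where
  "ent_vec a b =
     (\<chi> p. if p = (0,0) then a else if p = (0,1) then b else if p = (1,0) then - cnj b else cnj a)"

lemma ent_vec_nth:
  "ent_vec a b $ (0,0) = a" "ent_vec a b $ (0,1) = b"
  "ent_vec a b $ (1,0) = - cnj b" "ent_vec a b $ (1,1) = cnj a"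
  by (simp_all add: ent_vec_def)

lemma Re_expect_kron_pauli_ent_vec:
  "Re (expect (kron (pauli l) (pauli k)) (ent_vec a b)) =
     2 * quat_rotoinversion (Re a) (Im a) (Re b) (Im b) $ l $ k"
proof -
  have "l = 0 \<or> l = 1 \<or> l = 2" "k = 0 \<or> k = 1 \<or> k = 2"
    using exhaust_3 num3_3_eq_0 by metis+
  then show ?thesis
    unfolding expect_kron sum_UNIV_2 ent_vec_nth
    by (elim disjE) (simp_all add: pauli_nth quat_rotoinversion_nth algebra_simps power2_eq_square)
qed

lemma Re_expect_kron_pauli_id_ent_vec:
  "Re (expect (kron (pauli l) (mat 1)) (ent_vec a b)) = 0"
  "Re (expect (kron (mat 1) (pauli l)) (ent_vec a b)) = 0"
proof -
  have "l = 0 \<or> l = 1 \<or> l = 2"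
    using exhaust_3 num3_3_eq_0 by metis
  then show "Re (expect (kron (pauli l) (mat 1)) (ent_vec a b)) = 0"
    "Re (expect (kron (mat 1) (pauli l)) (ent_vec a b)) = 0"
    unfolding expect_kron sum_UNIV_2 ent_vec_nth
    by (elim disjE; simp add: pauli_nth mat_def algebra_simps)+
qed

lemma Re_expect_id_ent_vec: "Re (expect (mat 1) (ent_vec a b)) = 2 * ((cmod a)\<^sup>2 + (cmod b)\<^sup>2)"
  unfolding expect_def sum_UNIV_2x2 cmod_power2 by (simp add: mat_def ent_vec_nth power2_eq_square)

lemma Re_expect_pauli_state_ent_vec:
  "Re (expect (pauli_state \<beta> \<gamma> \<delta>) (ent_vec a b)) =
     ((cmod a)\<^sup>2 + (cmod b)\<^sup>2 + \<delta> \<bullet> quat_rotoinversion (Re a) (Im a) (Re b) (Im b)) / 2"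
  unfolding pauli_state_def
  by (simp add: expect_add expect_cscale expect_sum Re_expect_id_ent_vec
      Re_expect_kron_pauli_id_ent_vec Re_expect_kron_pauli_ent_vec inner_vec_def sum_distrib_left
      mult_ac)

lemma ptrace2_ent_vec: "ptrace2 (ent_vec a b) = cscale ((cmod a)\<^sup>2 + (cmod b)\<^sup>2) (mat 1)"
  unfolding vec_eq_iff forall_UNIV_2 complex_eq_iff cmod_power2
  by (simp add: ptrace2_def sum_UNIV_2 ent_vec_nth cscale_def mat_def power2_eq_square algebra_simps)

lemma ptrace1_ent_vec: "ptrace1 (ent_vec a b) = cscale ((cmod a)\<^sup>2 + (cmod b)\<^sup>2) (mat 1)"
  unfolding vec_eq_iff forall_UNIV_2 complex_eq_iff cmod_power2
  by (simp add: ptrace1_def sum_UNIV_2 ent_vec_nth cscale_def mat_def power2_eq_square algebra_simps)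

lemma maximally_entangled_smult_ent_vec:
  assumes c: "(cmod c)\<^sup>2 = 1/2" and ab: "(cmod a)\<^sup>2 + (cmod b)\<^sup>2 = 1"
  shows "maximally_entangled (c *s ent_vec a b)"
proof -
  have "norm (c *s ent_vec a b) = sqrt ((cmod c)\<^sup>2 * (2 * ((cmod a)\<^sup>2 + (cmod b)\<^sup>2)))"
    unfolding norm_vec_def L2_set_def sum_UNIV_2x2
    by (simp add: ent_vec_nth norm_mult algebra_simps)
  also have "\<dots> = 1"
    using c ab by simp
  finally have "norm (c *s ent_vec a b) = 1" .
  moreover have cc: "c * cnj c = 1/2"
    using c unfolding cmod_power2_eq_iff by simp
  have "ptrace2 (c *s ent_vec a b) = cscale (1/2) (mat 1)"
    and "ptrace1 (c *s ent_vec a b) = cscale (1/2) (mat 1)"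
    unfolding ptrace2_smult ptrace1_smult ptrace2_ent_vec ptrace1_ent_vec ab cc
    by (simp_all add: cscale_def)
  ultimately show ?thesis
    by (simp add: maximally_entangled_def)
qed

lemma maximally_entangled_obtain_ent_vec:
  assumes "maximally_entangled \<psi>"
  obtains c a b where "(cmod c)\<^sup>2 = 1/2" and "(cmod a)\<^sup>2 + (cmod b)\<^sup>2 = 1"
    and "\<psi> = c *s ent_vec a b"
proof -
  have "ptrace2 \<psi> = cscale (1/2) (mat 1)"
    using assms by (simp add: maximally_entangled_def)
  then obtain \<mu> where "cmod \<mu> = 1" and pq: "(cmod (\<psi>$(0,0)))\<^sup>2 + (cmod (\<psi>$(0,1)))\<^sup>2 = 1/2"
    and r: "\<psi>$(1,0) = - \<mu> * cnj (\<psi>$(0,1))" and s: "\<psi>$(1,1) = \<mu> * cnj (\<psi>$(0,0))"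
    by (rule ptrace2_half_obtain_phase)
  define \<nu> where "\<nu> = csqrt \<mu>"
  have \<nu>: "\<nu> * \<nu> = \<mu>"
    by (simp add: \<nu>_def flip: power2_eq_square)
  have "cmod \<nu> = 1"
    using \<open>cmod \<mu> = 1\<close> by (simp add: \<nu>_def)
  then have "\<nu> \<noteq> 0" and \<nu>_inv: "cnj \<nu> = 1 / \<nu>"
    using divide_conv_cnj[of \<nu> 1] by auto
  define k where "k = complex_of_real (sqrt 2)"
  have k: "k \<noteq> 0" "cmod k = sqrt 2" "cnj k = k"
    by (simp_all add: k_def)
  show thesis
  proof
    show "(cmod (\<nu> / k))\<^sup>2 = 1/2"
      using \<open>cmod \<nu> = 1\<close> k by (simp add: norm_divide power_divide)
    have "(cmod (k * cnj \<nu> * z))\<^sup>2 = 2 * (cmod z)\<^sup>2" for z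
      using \<open>cmod \<nu> = 1\<close> k by (simp add: norm_mult power_mult_distrib)
    then show "(cmod (k * cnj \<nu> * \<psi>$(0,0)))\<^sup>2 + (cmod (k * cnj \<nu> * \<psi>$(0,1)))\<^sup>2 = 1"
      using pq by simp
    have "\<nu> / k * (k * cnj \<nu> * z) = z" for z
      using \<open>\<nu> \<noteq> 0\<close> k by (simp add: \<nu>_inv)
    moreover have "\<nu> / k * cnj (k * cnj \<nu> * z) = \<mu> * cnj z" for z
      using \<open>\<nu> \<noteq> 0\<close> k by (simp add: \<nu>_inv flip: \<nu>)
    ultimately show "\<psi> = (\<nu> / k) *s ent_vec (k * cnj \<nu> * \<psi>$(0,0)) (k * cnj \<nu> * \<psi>$(0,1))"
      unfolding vec_eq_iff forall_UNIV_2x2 by (simp add: ent_vec_nth r s)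
  qed
qed

lemma singlet_fractions_eq:
  "{Re (expect (pauli_state \<beta> \<gamma> \<delta>) \<psi>) | \<psi>. maximally_entangled \<psi>} =
     (\<lambda>T. (1 + \<delta> \<bullet> T) / 4) ` {T. rotoinversion_matrix T}"
proof (intro equalityI subsetI)
  fix x
  assume "x \<in> {Re (expect (pauli_state \<beta> \<gamma> \<delta>) \<psi>) | \<psi>. maximally_entangled \<psi>}"
  then obtain \<psi> where x: "x = Re (expect (pauli_state \<beta> \<gamma> \<delta>) \<psi>)"
    and "maximally_entangled \<psi>"
    by blast
  then obtain c a b where c: "(cmod c)\<^sup>2 = 1/2" and ab: "(cmod a)\<^sup>2 + (cmod b)\<^sup>2 = 1"
    and \<psi>: "\<psi> = c *s ent_vec a b"
    using maximally_entangled_obtain_ent_vec by blast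
  define Q where "Q = quat_rotoinversion (Re a) (Im a) (Re b) (Im b)"
  have cc: "cnj c * c = 1/2"
    using c unfolding cmod_power2_eq_iff by (simp add: mult.commute)
  have "x = Re (expect (pauli_state \<beta> \<gamma> \<delta>) (ent_vec a b)) / 2"
    by (simp add: x \<psi> expect_smult cc)
  also have "\<dots> = (1 + \<delta> \<bullet> Q) / 4"
    using ab by (simp add: Re_expect_pauli_state_ent_vec Q_def)
  finally have "x = (1 + \<delta> \<bullet> Q) / 4" .
  moreover have "rotoinversion_matrix Q"
    using ab unfolding Q_def cmod_power2 by (intro rotoinversion_quat_rotoinversion) simp
  ultimately show "x \<in> (\<lambda>T. (1 + \<delta> \<bullet> T) / 4) ` {T. rotoinversion_matrix T}"
    by blast
next
  fix x
  assume "x \<in> (\<lambda>T. (1 + \<delta> \<bullet> T) / 4) ` {T. rotoinversion_matrix T}"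
  then obtain T where x: "x = (1 + \<delta> \<bullet> T) / 4" and "rotoinversion_matrix T"
    by blast
  then obtain q0 q1 q2 q3 where q: "q0\<^sup>2 + q1\<^sup>2 + q2\<^sup>2 + q3\<^sup>2 = 1"
    and T: "T = quat_rotoinversion q0 q1 q2 q3"
    using rotoinversion_matrix_obtain_quat by blast
  define c where "c = complex_of_real (1 / sqrt 2)"
  define \<psi> where "\<psi> = c *s ent_vec (Complex q0 q1) (Complex q2 q3)"
  have c: "(cmod c)\<^sup>2 = 1/2" and cc: "cnj c * c = 1/2"
    by (simp_all add: c_def norm_divide power_divide flip: of_real_mult)
  have ab: "(cmod (Complex q0 q1))\<^sup>2 + (cmod (Complex q2 q3))\<^sup>2 = 1"
    using q by (simp add: cmod_power2)
  have "Re (expect (pauli_state \<beta> \<gamma> \<delta>) \<psi>) =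
      Re (expect (pauli_state \<beta> \<gamma> \<delta>) (ent_vec (Complex q0 q1) (Complex q2 q3))) / 2"
    by (simp add: \<psi>_def expect_smult cc)
  also have "\<dots> = x"
    using ab by (simp add: x T Re_expect_pauli_state_ent_vec)
  finally have "x = Re (expect (pauli_state \<beta> \<gamma> \<delta>) \<psi>)" ..
  moreover have "maximally_entangled \<psi>"
    unfolding \<psi>_def using c ab by (rule maximally_entangled_smult_ent_vec)
  ultimately show "x \<in> {Re (expect (pauli_state \<beta> \<gamma> \<delta>) \<psi>) | \<psi>. maximally_entangled \<psi>}"
    by blast
qed

theorem proposition3p1:
  fixes \<beta> \<gamma> :: "real^3" and \<delta> :: "real^3^3" and s :: "real^3"
  assumes "density_matrix (pauli_state \<beta> \<gamma> \<delta>)"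
    and "singular_values_desc \<delta> s"
  shows "max_singlet_fraction (pauli_state \<beta> \<gamma> \<delta>) =
           (if det \<delta> < 0 then (1 + s $ 0 + s $ 1 + s $ 2) / 4
            else (1 + s $ 0 + s $ 1 - s $ 2) / 4)"
proof -
  let ?m = "if det \<delta> < 0 then s$0 + s$1 + s$2 else s$0 + s$1 - s$2"
  have "max_singlet_fraction (pauli_state \<beta> \<gamma> \<delta>) =
      Sup ((\<lambda>T. (1 + \<delta> \<bullet> T) / 4) ` {T. rotoinversion_matrix T})"
    unfolding max_singlet_fraction_def singlet_fractions_eq ..
  also have "\<dots> = (1 + ?m) / 4"
  proof (rule cSup_eq_maximum)
    obtain T where "rotoinversion_matrix T" and "\<delta> \<bullet> T = ?m"
      using inner_rotoinversion_attains[OF assms(2)] .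
    then show "(1 + ?m) / 4 \<in> (\<lambda>T. (1 + \<delta> \<bullet> T) / 4) ` {T. rotoinversion_matrix T}"
      by force
    show "y \<le> (1 + ?m) / 4" if "y \<in> (\<lambda>T. (1 + \<delta> \<bullet> T) / 4) ` {T. rotoinversion_matrix T}" for y
      using that inner_rotoinversion_le[OF assms(2)] by fastforce
  qed
  finally show ?thesis
    by (simp add: add.assoc)
qed

end
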